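(* Let $\Omega$ be a set, and let $G\le\mathrm{Sym}(\Omega)$ be block-faithful and $k$-by-block-transitive on $\Omega$ relative to an equivalence relation $\sim$ that is nontrivial (some class has more than one element), for some $k\ge 2$. Let $N$ be a nontrivial normal subgroup of $G$. Then $G = N G(\omega)$ for every $\omega\in\Omega$. In particular, $N$ is not abelian.
   Context: Blocks are $\sim$-classes; $G(\omega)$ is the stabilizer of $\omega$. $\Omega^{[k]}$ is the set of $k$-tuples no two entries of which lie in the same block. $G$ is $k$-by-block-transitive if $\sim$ is $G$-invariant, there are at least $k$ blocks, and $G$ is transitive on $\Omega^{[k]}$; it is block-faithful if it acts faithfully on the set of blocks. *)

theory Defs
  imports "HOL-Algebra.Algebra"
begin

text \<open>Sym(Omega) is the HOL-Algebra group BijGroup Omega (bijections of Omega,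
  extensional outside Omega). G is a subgroup given as a carrier set.\<close>

definition sep_tuples :: "'a set \<Rightarrow> ('a \<times> 'a) set \<Rightarrow> nat \<Rightarrow> 'a list set" where
  "sep_tuples \<Omega> R k = {xs. length xs = k \<and> set xs \<subseteq> \<Omega> \<and>
      (\<forall>i<k. \<forall>j<k. i \<noteq> j \<longrightarrow> (xs ! i, xs ! j) \<notin> R)}"

definition G_invariant :: "'a set \<Rightarrow> ('a \<times> 'a) set \<Rightarrow> ('a \<Rightarrow> 'a) set \<Rightarrow> bool" where
  "G_invariant \<Omega> R G \<longleftrightarrow>
     (\<forall>g\<in>G. \<forall>x\<in>\<Omega>. \<forall>y\<in>\<Omega>. (x, y) \<in> R \<longleftrightarrow> (g x, g y) \<in> R)"

definition at_least_k_blocks :: "'a set \<Rightarrow> ('a \<times> 'a) set \<Rightarrow> nat \<Rightarrow> bool" where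
  "at_least_k_blocks \<Omega> R k \<longleftrightarrow> (\<exists>B. B \<subseteq> \<Omega> // R \<and> finite B \<and> card B = k)"

definition k_by_block_transitive ::
  "'a set \<Rightarrow> ('a \<times> 'a) set \<Rightarrow> ('a \<Rightarrow> 'a) set \<Rightarrow> nat \<Rightarrow> bool" where
  "k_by_block_transitive \<Omega> R G k \<longleftrightarrow>
     equiv \<Omega> R \<and> G_invariant \<Omega> R G \<and> at_least_k_blocks \<Omega> R k \<and>
     (\<forall>xs\<in>sep_tuples \<Omega> R k. \<forall>ys\<in>sep_tuples \<Omega> R k. \<exists>g\<in>G. map g xs = ys)"

definition block_faithful :: "'a set \<Rightarrow> ('a \<times> 'a) set \<Rightarrow> ('a \<Rightarrow> 'a) set \<Rightarrow> bool" where
  "block_faithful \<Omega> R G \<longleftrightarrow>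
     (\<forall>g\<in>G. (\<forall>B\<in>\<Omega> // R. g ` B = B) \<longrightarrow> g = \<one>\<^bsub>BijGroup \<Omega>\<^esub>)"

definition stabilizer :: "('a \<Rightarrow> 'a) set \<Rightarrow> 'a \<Rightarrow> ('a \<Rightarrow> 'a) set" where
  "stabilizer G \<omega> = {g \<in> G. g \<omega> = \<omega>}"

end

theory Submission
  imports Defs
begin

text \<open>A nontrivial element of N moves some block, so some n \<in> N maps a point to a point
  in a different block. Conjugating n by elements of G, which is transitive on pairs of
  points in different blocks, shows that N maps any point to any point in another block,
  and composing two such maps through a third block makes N transitive on \<Omega>. The Frattini
  argument then gives G = N G(\<omega>). If N were abelian, an element of N mapping a point to
  a different point of its own block would fix that block, hence, commuting with the
  transitive group N, fix every block, and block-faithfulness would make it trivial.\<close>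

definition transitive_on :: "'a set \<Rightarrow> ('a \<Rightarrow> 'a) set \<Rightarrow> bool" where
  "transitive_on \<Omega> N \<longleftrightarrow> (\<forall>x\<in>\<Omega>. \<forall>y\<in>\<Omega>. \<exists>n\<in>N. n x = y)"

lemma carrier_BijGroup: "carrier (BijGroup S) = Bij S"
  by (simp add: BijGroup_def)

lemma subgroup_BijGroup_subset: "subgroup G (BijGroup S) \<Longrightarrow> G \<subseteq> Bij S"
  using subgroup.subset carrier_BijGroup by metis

lemma BijGroup_mult_apply:
  "f \<in> Bij S \<Longrightarrow> g \<in> Bij S \<Longrightarrow> x \<in> S \<Longrightarrow> (f \<otimes>\<^bsub>BijGroup S\<^esub> g) x = f (g x)"
  by (simp add: BijGroup_def compose_def)

lemma BijGroup_inv_apply: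
  assumes "f \<in> Bij S" "x \<in> S"
  shows "(inv\<^bsub>BijGroup S\<^esub> f) (f x) = x"
proof -
  have "f x \<in> S" using assms Bij_imp_funcset by fast
  then show ?thesis
    using assms bij_betw_inv_into_left[of f S S x] by (simp add: inv_BijGroup Bij_def)
qed

lemma Bij_apply_closed: "f \<in> Bij S \<Longrightarrow> x \<in> S \<Longrightarrow> f x \<in> S"
  using Bij_imp_funcset by fast

lemma G_invariant_image_class:
  assumes "equiv \<Omega> R" "G_invariant \<Omega> R G" "g \<in> G" "g \<in> Bij \<Omega>" "x \<in> \<Omega>"
  shows "g ` R``{x} = R``{g x}"
proof
  have R: "R \<subseteq> \<Omega> \<times> \<Omega>" using assms(1) by (simp add: equiv_def refl_on_def)
  have inv: "\<And>u v. u \<in> \<Omega> \<Longrightarrow> v \<in> \<Omega> \<Longrightarrow> (u, v) \<in> R \<longleftrightarrow> (g u, g v) \<in> R"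
    using assms(2,3) unfolding G_invariant_def by blast
  show "g ` R``{x} \<subseteq> R``{g x}" using inv R assms(5) by blast
  show "R``{g x} \<subseteq> g ` R``{x}"
  proof
    fix y assume y: "y \<in> R``{g x}"
    moreover have "g ` \<Omega> = \<Omega>" using assms(4) by (simp add: Bij_def bij_betw_def)
    ultimately have "y \<in> g ` \<Omega>" using R by blast
    then obtain y' where "y' \<in> \<Omega>" "y = g y'" by blast
    then show "y \<in> g ` R``{x}" using inv[OF assms(5)] y by blast
  qed
qed

lemma sep_tuples_iff_distinct_classes:
  assumes "equiv \<Omega> R"
  shows "xs \<in> sep_tuples \<Omega> R k \<longleftrightarrow>
    length xs = k \<and> set xs \<subseteq> \<Omega> \<and> distinct (map (\<lambda>x. R``{x}) xs)"
proof -
  have "(xs ! i, xs ! j) \<in> R \<longleftrightarrow> R``{xs ! i} = R``{xs ! j}"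
    if "set xs \<subseteq> \<Omega>" "i < length xs" "j < length xs" for i j
    using that eq_equiv_class_iff[OF assms] by (metis nth_mem subsetD)
  then show ?thesis
    unfolding sep_tuples_def distinct_conv_nth by auto
qed

lemma sep_tuples_pair_iff:
  assumes "equiv \<Omega> R"
  shows "[a, b] \<in> sep_tuples \<Omega> R 2 \<longleftrightarrow> a \<in> \<Omega> \<and> b \<in> \<Omega> \<and> (a, b) \<notin> R"
  using eq_equiv_class_iff[OF assms, of a b]
  by (auto simp: sep_tuples_iff_distinct_classes[OF assms])

lemma sep_tuples_extend:
  assumes eq: "equiv \<Omega> R" and blocks: "at_least_k_blocks \<Omega> R k"
    and xs: "xs \<in> sep_tuples \<Omega> R j" and "j \<le> k"
  shows "\<exists>ys. xs @ ys \<in> sep_tuples \<Omega> R k"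
proof -
  let ?cls = "\<lambda>x. R``{x}"
  have xs': "length xs = j" "set xs \<subseteq> \<Omega>" "distinct (map ?cls xs)"
    using xs by (simp_all add: sep_tuples_iff_distinct_classes[OF eq])
  obtain B where B: "B \<subseteq> \<Omega> // R" "finite B" "card B = k"
    using blocks unfolding at_least_k_blocks_def by blast
  have "card B - card (?cls ` set xs) \<le> card (B - ?cls ` set xs)"
    by (rule diff_card_le_card_Diff) simp
  moreover have "card (?cls ` set xs) = j"
    using xs' distinct_card[of "map ?cls xs"] by simp
  ultimately have "k - j \<le> card (B - ?cls ` set xs)" using B(3) by simp
  then obtain C where C: "C \<subseteq> B - ?cls ` set xs" "card C = k - j"
    by (metis obtain_subset_with_card_n)
  obtain cs where cs: "set cs = C" "distinct cs"
    using finite_distinct_list[OF finite_subset[OF _ B(2)]] C(1) by blast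
  have rep: "y \<in> \<Omega> \<and> ?cls y = c" if c: "c \<in> \<Omega> // R" and "y \<in> c" for c y
  proof -
    obtain x where x: "c = ?cls x" using c by (rule quotientE)
    then have "?cls x = ?cls y" using \<open>y \<in> c\<close> equiv_class_eq[OF eq] by simp
    then show ?thesis using x \<open>y \<in> c\<close> in_quotient_imp_subset[OF eq c] by auto
  qed
  have some: "(SOME y. y \<in> c) \<in> c" if "c \<in> \<Omega> // R" for c
    using in_quotient_imp_non_empty[OF eq that] by (simp add: some_in_eq)
  have "set cs \<subseteq> \<Omega> // R" using cs(1) C(1) B(1) by blast
  then have rep_cs: "(SOME y. y \<in> c) \<in> \<Omega> \<and> ?cls (SOME y. y \<in> c) = c" if "c \<in> set cs" for c
    using rep some that by blast
  define ys where "ys = map (\<lambda>c. SOME y. y \<in> c) cs"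
  have "map ?cls ys = cs"
    unfolding ys_def map_map by (rule map_idI) (simp add: rep_cs)
  moreover have "set ys \<subseteq> \<Omega>" "length ys = k - j"
    unfolding ys_def using rep_cs cs C(2) distinct_card[OF cs(2)] by auto
  ultimately have "xs @ ys \<in> sep_tuples \<Omega> R k"
    using xs' cs C(1) \<open>j \<le> k\<close> by (auto simp: sep_tuples_iff_distinct_classes[OF eq])
  then show ?thesis ..
qed

lemma k_by_block_transitive_mono:
  assumes G: "k_by_block_transitive \<Omega> R G k" and "j \<le> k"
  shows "k_by_block_transitive \<Omega> R G j"
proof -
  have eq: "equiv \<Omega> R" and blocks: "at_least_k_blocks \<Omega> R k"
    and trans: "\<forall>xs\<in>sep_tuples \<Omega> R k. \<forall>ys\<in>sep_tuples \<Omega> R k. \<exists>g\<in>G. map g xs = ys"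
    using G unfolding k_by_block_transitive_def by auto
  have "at_least_k_blocks \<Omega> R j"
    using blocks \<open>j \<le> k\<close> unfolding at_least_k_blocks_def
    by (metis finite_subset obtain_subset_with_card_n order.trans)
  moreover have "\<exists>g\<in>G. map g xs = ys"
    if xs: "xs \<in> sep_tuples \<Omega> R j" and ys: "ys \<in> sep_tuples \<Omega> R j" for xs ys
  proof -
    obtain xs' ys' where "xs @ xs' \<in> sep_tuples \<Omega> R k" "ys @ ys' \<in> sep_tuples \<Omega> R k"
      using sep_tuples_extend[OF eq blocks xs \<open>j \<le> k\<close>]
        sep_tuples_extend[OF eq blocks ys \<open>j \<le> k\<close>] by blast
    then obtain g where "g \<in> G" "map g xs @ map g xs' = ys @ ys'"
      using trans by fastforce
    moreover have "length (map g xs) = length ys"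
      using xs ys by (simp add: sep_tuples_def)
    ultimately show ?thesis by auto
  qed
  ultimately show ?thesis using G unfolding k_by_block_transitive_def by blast
qed

lemma G_invariant_subset: "G_invariant \<Omega> R G \<Longrightarrow> N \<subseteq> G \<Longrightarrow> G_invariant \<Omega> R N"
  unfolding G_invariant_def by (meson subsetD)

lemma block_faithful_subset: "block_faithful \<Omega> R G \<Longrightarrow> N \<subseteq> G \<Longrightarrow> block_faithful \<Omega> R N"
  unfolding block_faithful_def by (meson subsetD)

lemma two_by_block_transitive_pairs:
  assumes G: "k_by_block_transitive \<Omega> R G 2"
    and "a \<in> \<Omega>" "b \<in> \<Omega>" "(a, b) \<notin> R" and "c \<in> \<Omega>" "d \<in> \<Omega>" "(c, d) \<notin> R"
  shows "\<exists>g\<in>G. g a = c \<and> g b = d"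
proof -
  have eq: "equiv \<Omega> R" using G by (simp add: k_by_block_transitive_def)
  have "[a, b] \<in> sep_tuples \<Omega> R 2" "[c, d] \<in> sep_tuples \<Omega> R 2"
    using assms by (simp_all add: sep_tuples_pair_iff[OF eq])
  then show ?thesis using G unfolding k_by_block_transitive_def by fastforce
qed

lemma two_blocks_ex_outside_class:
  assumes eq: "equiv \<Omega> R" and "at_least_k_blocks \<Omega> R 2" and "x \<in> \<Omega>"
  shows "\<exists>z\<in>\<Omega>. (x, z) \<notin> R"
proof -
  obtain B where B: "B \<subseteq> \<Omega> // R" "card B = 2"
    using assms(2) unfolding at_least_k_blocks_def by blast
  then obtain c where c: "c \<in> \<Omega> // R" "c \<noteq> R``{x}"
    by (metis card_2_iff insert_subset)
  obtain z where "z \<in> \<Omega>" "c = R``{z}" using c(1) by (rule quotientE)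
  then show ?thesis using c equiv_class_eq[OF eq] by blast
qed

lemma block_faithful_ex_moved_class:
  assumes eq: "equiv \<Omega> R" and "G_invariant \<Omega> R G" and "block_faithful \<Omega> R G"
    and n: "n \<in> G" "n \<in> Bij \<Omega>" "n \<noteq> \<one>\<^bsub>BijGroup \<Omega>\<^esub>"
  shows "\<exists>\<beta>\<in>\<Omega>. (\<beta>, n \<beta>) \<notin> R"
proof -
  have "\<not> (\<forall>c\<in>\<Omega> // R. n ` c = c)"
    using bspec[OF assms(3)[unfolded block_faithful_def] n(1)] n(3) by blast
  then obtain c where c: "c \<in> \<Omega> // R" "n ` c \<noteq> c" by blast
  obtain \<beta> where \<beta>: "\<beta> \<in> \<Omega>" "c = R``{\<beta>}" using c(1) by (rule quotientE)
  then have "R``{n \<beta>} \<noteq> R``{\<beta>}"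
    using c G_invariant_image_class[OF eq assms(2) n(1,2)] by simp
  then show ?thesis using \<beta>(1) equiv_class_eq[OF eq] by blast
qed

lemma normal_subgroup_moves_separated_pairs:
  assumes G: "subgroup G (BijGroup \<Omega>)" and G2: "k_by_block_transitive \<Omega> R G 2"
    and N: "N \<lhd> (BijGroup \<Omega>)\<lparr>carrier := G\<rparr>"
    and n: "n \<in> N" and \<beta>: "\<beta> \<in> \<Omega>" "(\<beta>, n \<beta>) \<notin> R"
    and uv: "u \<in> \<Omega>" "v \<in> \<Omega>" "(u, v) \<notin> R"
  shows "\<exists>m\<in>N. m u = v"
proof -
  interpret B: group "BijGroup \<Omega>" by (rule group_BijGroup)
  have "n \<in> G" using n normal_imp_subgroup[OF N] subgroup.subset by fastforce
  then have nB: "n \<in> Bij \<Omega>" using subgroup_BijGroup_subset[OF G] by blast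
  obtain g where g: "g \<in> G" "g \<beta> = u" "g (n \<beta>) = v"
    using two_by_block_transitive_pairs[OF G2 \<beta>(1) Bij_apply_closed[OF nB \<beta>(1)] \<beta>(2) uv] by blast
  have gB: "g \<in> Bij \<Omega>" using g(1) subgroup_BijGroup_subset[OF G] by blast
  have gn: "g \<otimes>\<^bsub>BijGroup \<Omega>\<^esub> n \<in> Bij \<Omega>" and g': "inv\<^bsub>BijGroup \<Omega>\<^esub> g \<in> Bij \<Omega>"
    using gB nB B.m_closed B.inv_closed unfolding carrier_BijGroup by auto
  have "(g \<otimes>\<^bsub>BijGroup \<Omega>\<^esub> n \<otimes>\<^bsub>BijGroup \<Omega>\<^esub> inv\<^bsub>BijGroup \<Omega>\<^esub> g) u
      = (g \<otimes>\<^bsub>BijGroup \<Omega>\<^esub> n) ((inv\<^bsub>BijGroup \<Omega>\<^esub> g) (g \<beta>))"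
    using BijGroup_mult_apply[OF gn g' uv(1)] g(2) by simp
  also have "\<dots> = v"
    using BijGroup_inv_apply[OF gB \<beta>(1)] BijGroup_mult_apply[OF gB nB \<beta>(1)] g(3) by simp
  finally have "(g \<otimes>\<^bsub>BijGroup \<Omega>\<^esub> n \<otimes>\<^bsub>BijGroup \<Omega>\<^esub> inv\<^bsub>BijGroup \<Omega>\<^esub> g) u = v" .
  moreover have "g \<otimes>\<^bsub>BijGroup \<Omega>\<^esub> n \<otimes>\<^bsub>BijGroup \<Omega>\<^esub> inv\<^bsub>BijGroup \<Omega>\<^esub> g \<in> N"
    using normal.inv_op_closed2[OF N, of g n] B.m_inv_consistent[OF G g(1)] g(1) n by simp
  ultimately show ?thesis by blast
qed

lemma normal_subgroup_transitive:
  assumes G: "subgroup G (BijGroup \<Omega>)" and G2: "k_by_block_transitive \<Omega> R G 2"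
    and faithful: "block_faithful \<Omega> R G"
    and N: "N \<lhd> (BijGroup \<Omega>)\<lparr>carrier := G\<rparr>" and "N \<noteq> {\<one>\<^bsub>BijGroup \<Omega>\<^esub>}"
  shows "transitive_on \<Omega> N"
  unfolding transitive_on_def
proof (intro ballI)
  fix x y assume xy: "x \<in> \<Omega>" "y \<in> \<Omega>"
  have eq: "equiv \<Omega> R" and inv: "G_invariant \<Omega> R G" and blocks: "at_least_k_blocks \<Omega> R 2"
    using G2 unfolding k_by_block_transitive_def by auto
  have sN: "subgroup N (BijGroup \<Omega>)"
    using group.incl_subgroup[OF group_BijGroup G normal_imp_subgroup[OF N]] .
  have NG: "N \<subseteq> G" using normal_imp_subgroup[OF N] subgroup.subset by fastforce
  have NB: "N \<subseteq> Bij \<Omega>" using subgroup_BijGroup_subset[OF sN] .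
  obtain n where n: "n \<in> N" "n \<noteq> \<one>\<^bsub>BijGroup \<Omega>\<^esub>"
    using \<open>N \<noteq> _\<close> subgroup.one_closed[OF sN] by blast
  then obtain \<beta> where "\<beta> \<in> \<Omega>" "(\<beta>, n \<beta>) \<notin> R"
    using block_faithful_ex_moved_class[OF eq inv faithful] NG NB by blast
  then have across: "\<exists>m\<in>N. m u = v" if "u \<in> \<Omega>" "v \<in> \<Omega>" "(u, v) \<notin> R" for u v
    using normal_subgroup_moves_separated_pairs[OF G G2 N n(1)] that by blast
  show "\<exists>m\<in>N. m x = y"
  proof (cases "(x, y) \<in> R")
    case False
    then show ?thesis using across xy by blast
  next
    case True
    obtain z where z: "z \<in> \<Omega>" "(x, z) \<notin> R"
      using two_blocks_ex_outside_class[OF eq blocks xy(1)] by blast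
    then have "(z, y) \<notin> R" using True eq by (meson equiv_def symE transE)
    then obtain m1 m2 where m1: "m1 \<in> N" "m1 x = z" and m2: "m2 \<in> N" "m2 z = y"
      using across xy z by meson
    have "(m2 \<otimes>\<^bsub>BijGroup \<Omega>\<^esub> m1) x = y"
      using m1 m2 NB xy(1) by (simp add: subsetD BijGroup_mult_apply)
    then show ?thesis using subgroup.m_closed[OF sN m2(1) m1(1)] by blast
  qed
qed

lemma transitive_subgroup_mult_stabilizer:
  assumes G: "subgroup G (BijGroup \<Omega>)" and N: "subgroup N (BijGroup \<Omega>)" "N \<subseteq> G"
    and trans: "transitive_on \<Omega> N" and \<omega>: "\<omega> \<in> \<Omega>"
  shows "G = N <#>\<^bsub>BijGroup \<Omega>\<^esub> stabilizer G \<omega>"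
proof
  interpret B: group "BijGroup \<Omega>" by (rule group_BijGroup)
  show "G \<subseteq> N <#>\<^bsub>BijGroup \<Omega>\<^esub> stabilizer G \<omega>"
  proof
    fix g assume g: "g \<in> G"
    then have gB: "g \<in> Bij \<Omega>" using subgroup_BijGroup_subset[OF G] by blast
    obtain n where n: "n \<in> N" "n \<omega> = g \<omega>"
      using trans \<omega> Bij_apply_closed[OF gB \<omega>] unfolding transitive_on_def by blast
    have nB: "n \<in> Bij \<Omega>" using n(1) subgroup_BijGroup_subset[OF N(1)] by blast
    define h where "h = inv\<^bsub>BijGroup \<Omega>\<^esub> n \<otimes>\<^bsub>BijGroup \<Omega>\<^esub> g"
    have "h \<in> G"
      unfolding h_def using G g n N(2) by (blast intro: subgroup.m_closed subgroup.m_inv_closed)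
    moreover have "h \<omega> = \<omega>"
      unfolding h_def using nB gB \<omega> n(2)
      by (metis BijGroup_inv_apply BijGroup_mult_apply B.inv_closed carrier_BijGroup)
    ultimately have "h \<in> stabilizer G \<omega>" by (simp add: stabilizer_def)
    moreover have "g = n \<otimes>\<^bsub>BijGroup \<Omega>\<^esub> h"
      using nB gB unfolding h_def carrier_BijGroup[symmetric] by (simp add: B.m_assoc[symmetric])
    ultimately show "g \<in> N <#>\<^bsub>BijGroup \<Omega>\<^esub> stabilizer G \<omega>"
      unfolding set_mult_def using n(1) by blast
  qed
  show "N <#>\<^bsub>BijGroup \<Omega>\<^esub> stabilizer G \<omega> \<subseteq> G"
    unfolding set_mult_def stabilizer_def using subgroup.m_closed[OF G] N(2) by blast
qed

lemma transitive_block_faithful_noncommutative: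
  assumes eq: "equiv \<Omega> R" and inv: "G_invariant \<Omega> R N" and faithful: "block_faithful \<Omega> R N"
    and NB: "N \<subseteq> Bij \<Omega>" and trans: "transitive_on \<Omega> N"
    and xy: "x \<in> \<Omega>" "y \<in> \<Omega>" "x \<noteq> y" "(x, y) \<in> R"
  shows "\<not> (\<forall>a\<in>N. \<forall>b\<in>N. a \<otimes>\<^bsub>BijGroup \<Omega>\<^esub> b = b \<otimes>\<^bsub>BijGroup \<Omega>\<^esub> a)"
proof
  assume comm: "\<forall>a\<in>N. \<forall>b\<in>N. a \<otimes>\<^bsub>BijGroup \<Omega>\<^esub> b = b \<otimes>\<^bsub>BijGroup \<Omega>\<^esub> a"
  obtain m where m: "m \<in> N" "m x = y" using trans xy unfolding transitive_on_def by blast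
  have mB: "m \<in> Bij \<Omega>" using m(1) NB by blast
  have fixes_x: "m ` R``{x} = R``{x}"
    using G_invariant_image_class[OF eq inv m(1) mB xy(1)] m(2) equiv_class_eq[OF eq xy(4)] by simp
  have fixes_all: "\<forall>c\<in>\<Omega> // R. m ` c = c"
  proof
    fix c assume c: "c \<in> \<Omega> // R"
    obtain w where w: "w \<in> \<Omega>" "c = R``{w}" using c by (rule quotientE)
    obtain n where n: "n \<in> N" "n x = w" using trans xy(1) w(1) unfolding transitive_on_def by blast
    have nB: "n \<in> Bij \<Omega>" using n(1) NB by blast
    have c: "c = n ` R``{x}" using G_invariant_image_class[OF eq inv n(1) nB xy(1)] n w by simp
    have "m (n z) = n (m z)" if "z \<in> R``{x}" for z
    proof -
      have z: "z \<in> \<Omega>" using that eq by (auto simp: equiv_def refl_on_def)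
      have mn: "m \<otimes>\<^bsub>BijGroup \<Omega>\<^esub> n = n \<otimes>\<^bsub>BijGroup \<Omega>\<^esub> m" using comm m(1) n(1) by blast
      have "m (n z) = (m \<otimes>\<^bsub>BijGroup \<Omega>\<^esub> n) z" using mB nB z by (simp add: BijGroup_mult_apply)
      also have "\<dots> = n (m z)" unfolding mn using mB nB z by (simp add: BijGroup_mult_apply)
      finally show ?thesis .
    qed
    then have "m ` n ` R``{x} = n ` m ` R``{x}"
      unfolding image_image by (rule image_cong[OF refl])
    then show "m ` c = c" unfolding c fixes_x .
  qed
  have "m = \<one>\<^bsub>BijGroup \<Omega>\<^esub>"
    using bspec[OF faithful[unfolded block_faithful_def] m(1)] fixes_all by (rule mp)
  then have "m x = x" using xy(1) by (simp add: BijGroup_def)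
  then show False using m(2) xy(3) by simp
qed

theorem corollary2p4:
  fixes \<Omega> :: "'a set" and R :: "('a \<times> 'a) set" and G N :: "('a \<Rightarrow> 'a) set" and k :: nat
  assumes "subgroup G (BijGroup \<Omega>)"
    and "k \<ge> 2"
    and "k_by_block_transitive \<Omega> R G k"
    and "block_faithful \<Omega> R G"
    and "\<exists>x\<in>\<Omega>. \<exists>y\<in>\<Omega>. x \<noteq> y \<and> (x, y) \<in> R"
    and "N \<lhd> (BijGroup \<Omega>)\<lparr>carrier := G\<rparr>"
    and "N \<noteq> {\<one>\<^bsub>BijGroup \<Omega>\<^esub>}"
  shows "(\<forall>\<omega>\<in>\<Omega>. G = N <#>\<^bsub>BijGroup \<Omega>\<^esub> stabilizer G \<omega>)
     \<and> \<not> (\<forall>a\<in>N. \<forall>b\<in>N. a \<otimes>\<^bsub>BijGroup \<Omega>\<^esub> b = b \<otimes>\<^bsub>BijGroup \<Omega>\<^esub> a)"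
proof -
  have G2: "k_by_block_transitive \<Omega> R G 2"
    using k_by_block_transitive_mono assms(2,3) by blast
  have eq: "equiv \<Omega> R" and inv: "G_invariant \<Omega> R G"
    using G2 unfolding k_by_block_transitive_def by auto
  have N: "subgroup N (BijGroup \<Omega>)" "N \<subseteq> G"
    using group.incl_subgroup[OF group_BijGroup assms(1) normal_imp_subgroup[OF assms(6)]]
      subgroup.subset[OF normal_imp_subgroup[OF assms(6)]] by simp_all
  have NB: "N \<subseteq> Bij \<Omega>" using subgroup_BijGroup_subset[OF N(1)] .
  have trans: "transitive_on \<Omega> N"
    using normal_subgroup_transitive[OF assms(1) G2 assms(4,6,7)] .
  obtain x y where xy: "x \<in> \<Omega>" "y \<in> \<Omega>" "x \<noteq> y" "(x, y) \<in> R" using assms(5) by blast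
  have "\<forall>\<omega>\<in>\<Omega>. G = N <#>\<^bsub>BijGroup \<Omega>\<^esub> stabilizer G \<omega>"
    using transitive_subgroup_mult_stabilizer[OF assms(1) N trans] by blast
  moreover have "\<not> (\<forall>a\<in>N. \<forall>b\<in>N. a \<otimes>\<^bsub>BijGroup \<Omega>\<^esub> b = b \<otimes>\<^bsub>BijGroup \<Omega>\<^esub> a)"
    using transitive_block_faithful_noncommutative[OF eq G_invariant_subset[OF inv N(2)]
        block_faithful_subset[OF assms(4) N(2)] NB trans xy] .
  ultimately show ?thesis ..
qed

end
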